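(* For every $n\in\mathbb N$, \[ \mathsf{I}_n(Y;Z_1,\dots,Z_n)=\mathsf{HLS}_n\Bigl(Y,\bigl(Y^{\sigma_n([n]\setminus C)}Z_{\#C}\bigr)_{\varnothing\ne C\subseteq[n]}\Bigr). \]
   Context: Hall–Littlewood–Schubert series: Let $[n]=\{1,\dots,n\}$. $\mathrm{SSYT}_n$ is the set of semistandard Young tableaux with entries in $[n]$ (including the empty one); a tableau is identified with its sequence of columns $(C_1,\dots,C_\ell)$, $C_j\subseteq[n]$ the set of entries of column $j$, and $T_{ij}$ is the entry in row $i$, column $j$. $T$ is reduced if its columns are pairwise distinct; $\mathrm{rSSYT}_n$ is the finite set of reduced tableaux. For cells $(i,j),(i,j+1)$ both in $T$, $\mathrm{Leg}^+_T(i,j)=C_j\cap\{T_{ij},\dots,T_{i,j+1}\}$ if $T_{i,j+1}\notin C_j$, else $\varnothing$ ($\varnothing$ if a cell is missing). $\Phi_T(Y)=\prod_{\mathrm{Leg}^+_T(i,j)\neq\varnothing}(1-Y^{\#\mathrm{Leg}^+_T(i,j)})$. For variables $\mathbf X=(X_C)_{\varnothing\ne C\subseteq[n]}$, $\mathsf{HLS}_n(Y,\mathbf X)=\sum_{T\in\mathrm{rSSYT}_n}\Phi_T(Y)\prod_{C\in T}\frac{X_C}{1-X_C}$; $\mathsf{HLS}_n(Y,(f_C)_C)$ denotes the substitution $X_C\mapsto f_C$. Schubert dimension: $\sigma_n(C)=\sum_{i\in[n]\setminus C}i-\binom{n-\#C+1}{2}$. Gaussian multinomials: $\binom{n}{\varnothing}_Y=1$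 and for $\varnothing\ne I\subseteq[n]$ with $k=\max I$, $\binom{n}{I}_Y=\binom{n}{k}_Y\binom{k}{I\setminus\{k\}}_Y$, where $\binom{n}{k}_Y=\prod_{i=1}^k\frac{1-Y^{n-k+i}}{1-Y^i}$. The Igusa function is $\mathsf I_n(Y;Z_1,\dots,Z_n)=\sum_{I\subseteq[n]}\binom{n}{I}_Y\prod_{i\in I}\frac{Z_i}{1-Z_i}$. *)

theory Defs
  imports Main
begin

(* Tableaux are lists of columns; each column is the (nonempty) set of its entries.
   Rows are indexed from 0: entry (i,j) is the i-th smallest element of column j. *)

definition entry :: "nat set \<Rightarrow> nat \<Rightarrow> nat" where
  "entry C i = sorted_list_of_set C ! i"

definition is_ssyt :: "nat \<Rightarrow> nat set list \<Rightarrow> bool" where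
  "is_ssyt n cs \<longleftrightarrow>
     (\<forall>C\<in>set cs. C \<noteq> {} \<and> C \<subseteq> {1..n}) \<and>
     (\<forall>j. Suc j < length cs \<longrightarrow>
        card (cs ! Suc j) \<le> card (cs ! j) \<and>
        (\<forall>i < card (cs ! Suc j). entry (cs ! j) i \<le> entry (cs ! Suc j) i))"

definition rSSYT :: "nat \<Rightarrow> nat set list set" where
  "rSSYT n = {cs. is_ssyt n cs \<and> distinct cs}"

definition leg_cells :: "nat set list \<Rightarrow> (nat \<times> nat) set" where
  "leg_cells cs = {(i, j). Suc j < length cs \<and> i < card (cs ! Suc j) \<and> i < card (cs ! j)}"

definition leg_plus :: "nat set list \<Rightarrow> nat \<Rightarrow> nat \<Rightarrow> nat set" where
  "leg_plus cs i j =
     (if (i, j) \<in> leg_cells cs \<and> entry (cs ! Suc j) i \<notin> cs ! j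
      then cs ! j \<inter> {entry (cs ! j) i .. entry (cs ! Suc j) i} else {})"

definition Phi :: "nat set list \<Rightarrow> 'a::field \<Rightarrow> 'a" where
  "Phi cs Y = (\<Prod>(i, j) \<in> {(i, j) \<in> leg_cells cs. leg_plus cs i j \<noteq> {}}.
                 1 - Y ^ card (leg_plus cs i j))"

definition HLS :: "nat \<Rightarrow> 'a::field \<Rightarrow> (nat set \<Rightarrow> 'a) \<Rightarrow> 'a" where
  "HLS n Y X = (\<Sum>cs \<in> rSSYT n. Phi cs Y * (\<Prod>C \<in> set cs. X C / (1 - X C)))"

(* Schubert dimension sigma_n(C) (always a nonnegative integer) *)
definition schubert_dim :: "nat \<Rightarrow> nat set \<Rightarrow> nat" where
  "schubert_dim n C = (\<Sum>i \<in> {1..n} - C. i) - ((n - card C + 1) choose 2)"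

definition gbinom :: "nat \<Rightarrow> nat \<Rightarrow> 'a::field \<Rightarrow> 'a" where
  "gbinom n k Y = (\<Prod>i = 1..k. (1 - Y ^ (n - k + i)) / (1 - Y ^ i))"

(* descending list of elements: binom(n; k1 > k2 > ...) = binom(n,k1) binom(k1; k2 > ...) *)
fun gmulti_list :: "nat \<Rightarrow> nat list \<Rightarrow> 'a::field \<Rightarrow> 'a" where
  "gmulti_list n [] Y = 1"
| "gmulti_list n (k # ks) Y = gbinom n k Y * gmulti_list k ks Y"

definition gmulti :: "nat \<Rightarrow> nat set \<Rightarrow> 'a::field \<Rightarrow> 'a" where
  "gmulti n I Y = gmulti_list n (rev (sorted_list_of_set I)) Y"

definition igusa :: "nat \<Rightarrow> 'a::field \<Rightarrow> (nat \<Rightarrow> 'a) \<Rightarrow> 'a" where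
  "igusa n Y Z = (\<Sum>I \<in> Pow {1..n}. gmulti n I Y * (\<Prod>i \<in> I. Z i / (1 - Z i)))"

end

theory Submission
  imports Defs
begin

text \<open>
  Writing \<open>C \<le> D\<close> when column \<open>C\<close> may stand immediately left of \<open>D\<close> in a semistandard
  tableau, reduced tableaux are exactly the strictly increasing chains of nonempty columns, and
  \<open>\<Phi>\<^sub>T\<close> is a product of factors attached to pairs of adjacent columns. With
  \<open>X\<^sub>C = Y\<^bsup>\<sigma>(C)\<^esup> Z\<^bsub>#C\<^esub>\<close>, where \<open>\<sigma>(C) = \<Sigma>C - binom(#C+1,2) = \<sigma>\<^sub>n([n] - C)\<close>,
  the series \<open>HLS\<^sub>n\<close> thus becomes a transfer-matrix sum over chains.

  The key identity: for a column \<open>D\<close> of length \<open>d\<close>, summing \<open>Y\<^bsup>\<sigma>(C)\<^esup>\<close> times the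
  factor of the pair \<open>(C, D)\<close> over all \<open>C \<le> D\<close> of length \<open>k\<close> gives the Gaussian binomial
  coefficient \<open>binom(n-d, k-d)\<^sub>Y\<close> (induction on \<open>n\<close>, according to whether \<open>n\<close> lies in
  \<open>C\<close> and in \<open>D\<close>). By well-founded induction along the column order it follows that the
  tableaux with last column \<open>D\<close> contribute \<open>Y\<^bsup>\<sigma>(D)\<^esup> Z\<^sub>d/(1 - Z\<^sub>d) \<cdot> I\<^sub>n\<^sub>-\<^sub>d(Z\<^sub>d\<^sub>+\<^sub>1, \<dots>)\<close>,
  and summing over \<open>D\<close> reproduces the recursion of \<open>I\<^sub>n\<close> obtained by splitting off the least
  element of \<open>I\<close>.
\<close>

section \<open>Gaussian binomial coefficients\<close>

fun qbinomial :: "'a::comm_ring_1 \<Rightarrow> nat \<Rightarrow> nat \<Rightarrow> 'a" where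
  "qbinomial q m 0 = 1"
| "qbinomial q 0 (Suc r) = 0"
| "qbinomial q (Suc m) (Suc r) = qbinomial q m (Suc r) + q ^ (m - r) * qbinomial q m r"

lemma qbinomial_eq_0: "m < r \<Longrightarrow> qbinomial q m r = 0"
proof (induction m arbitrary: r)
  case 0 then show ?case by (cases r) auto
next
  case (Suc m) then show ?case by (cases r) auto
qed

lemma qbinomial_Suc_ratio:
  "(1 - q ^ Suc r) * qbinomial q m (Suc r) = (1 - q ^ (m - r)) * qbinomial q m r"
proof (induction m arbitrary: r)
  case 0 then show ?case by (cases r) auto
next
  case (Suc m)
  show ?case
  proof (cases r)
    case 0
    have "(1 - q) * qbinomial q (Suc m) 1 = (1 - q) * qbinomial q m 1 + (1 - q) * q ^ m"
      by (simp add: algebra_simps)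
    also have "\<dots> = 1 - q ^ Suc m"
      using Suc.IH[of 0] by (simp add: algebra_simps)
    finally show ?thesis using 0 by simp
  next
    case (Suc s)
    show ?thesis
    proof (cases "s < m")
      case True
      then obtain d where m: "m = s + 1 + d" using less_imp_Suc_add by fastforce
      have IH1: "(1 - q ^ Suc (Suc s)) * qbinomial q m (Suc (Suc s)) = (1 - q ^ d) * qbinomial q m (Suc s)"
        using Suc.IH[of "Suc s"] m by simp
      have IH0: "(1 - q ^ Suc s) * qbinomial q m (Suc s) = (1 - q ^ Suc d) * qbinomial q m s"
        using Suc.IH[of s] m by simp
      have "(1 - q ^ Suc r) * qbinomial q (Suc m) (Suc r)
          = (1 - q ^ Suc (Suc s)) * qbinomial q m (Suc (Suc s))
            + (1 - q ^ Suc (Suc s)) * q ^ d * qbinomial q m (Suc s)"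
        using Suc m by (simp add: algebra_simps)
      also have "\<dots> = (1 - q ^ (s + 1 + d + 1)) * qbinomial q m (Suc s)"
        unfolding IH1 by (simp add: algebra_simps power_add)
      also have "\<dots> = (1 - q ^ Suc d) * qbinomial q m (Suc s)
                      + q ^ Suc d * ((1 - q ^ Suc s) * qbinomial q m (Suc s))"
        by (simp add: algebra_simps power_add)
      also have "\<dots> = (1 - q ^ (Suc m - r)) * qbinomial q (Suc m) r"
        unfolding IH0 using Suc m by (simp add: algebra_simps)
      finally show ?thesis .
    next
      case False
      then have "qbinomial q m (Suc s) = 0" "qbinomial q m (Suc (Suc s)) = 0"
        by (auto intro: qbinomial_eq_0)
      moreover have "s \<noteq> m \<Longrightarrow> qbinomial q m s = 0"
        using False by (auto intro: qbinomial_eq_0)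
      ultimately show ?thesis using Suc by (cases "s = m") simp_all
    qed
  qed
qed

definition qfact :: "'a::comm_ring_1 \<Rightarrow> nat \<Rightarrow> 'a" where
  "qfact q k = (\<Prod>i = 1..k. 1 - q ^ i)"

lemma qfact_Suc: "qfact q (Suc k) = qfact q k * (1 - q ^ Suc k)"
  by (simp add: qfact_def)

lemma qfact_add: "qfact q (c + b) = qfact q c * (\<Prod>i = 1..b. 1 - q ^ (c + i))"
  by (induction b) (simp_all add: qfact_Suc algebra_simps)

lemma qfact_nonzero:
  fixes q :: "'a::field"
  assumes "\<forall>i\<in>{1..a}. q ^ i \<noteq> 1"
  shows "qfact q a \<noteq> 0"
  using assms unfolding qfact_def by (auto simp: prod_zero_iff)

lemma qbinomial_qfact:
  "b \<le> a \<Longrightarrow> qbinomial q a b * qfact q b * qfact q (a - b) = qfact q a"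
proof (induction b)
  case 0 then show ?case by (simp add: qfact_def)
next
  case (Suc b)
  have split: "qfact q (a - b) = qfact q (a - Suc b) * (1 - q ^ (a - b))"
    using Suc.prems qfact_Suc[of q "a - Suc b"] by (simp add: Suc_diff_Suc)
  have "qbinomial q a (Suc b) * qfact q (Suc b) * qfact q (a - Suc b)
      = ((1 - q ^ Suc b) * qbinomial q a (Suc b)) * qfact q b * qfact q (a - Suc b)"
    by (simp add: qfact_Suc algebra_simps)
  also have "\<dots> = (1 - q ^ (a - b)) * qbinomial q a b * qfact q b * qfact q (a - Suc b)"
    by (simp only: qbinomial_Suc_ratio)
  also have "\<dots> = qbinomial q a b * qfact q b * qfact q (a - b)"
    unfolding split by (simp add: algebra_simps)
  finally show ?case using Suc by simp
qed

lemma gbinom_eq_qbinomial: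
  fixes Y :: "'a::field"
  assumes Y: "\<forall>i\<in>{1..a}. Y ^ i \<noteq> 1" and "b \<le> a"
  shows "gbinom a b Y = qbinomial Y a b"
proof -
  have nz: "qfact Y a \<noteq> 0" "qfact Y b \<noteq> 0" "qfact Y (a - b) \<noteq> 0"
    using assms by (auto intro!: qfact_nonzero)
  have "gbinom a b Y = (\<Prod>i = 1..b. 1 - Y ^ (a - b + i)) / qfact Y b"
    unfolding gbinom_def qfact_def by (simp add: prod_dividef)
  also have "(\<Prod>i = 1..b. 1 - Y ^ (a - b + i)) = qfact Y a / qfact Y (a - b)"
    using qfact_add[of Y "a - b" b] assms nz by (simp add: field_simps)
  also have "qfact Y a / qfact Y (a - b) / qfact Y b = qbinomial Y a b"
    using qbinomial_qfact[OF assms(2), of Y] nz by (simp add: field_simps)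
  finally show ?thesis .
qed

lemma qbinomial_mult_qbinomial:
  fixes Y :: "'a::field"
  assumes Y: "\<forall>i\<in>{1..a}. Y ^ i \<noteq> 1" and "l + j \<le> a"
  shows "qbinomial Y a (l + j) * qbinomial Y (l + j) j = qbinomial Y a j * qbinomial Y (a - j) l"
proof -
  define P where "P = qfact Y j * qfact Y l * qfact Y (a - j - l)"
  have "P \<noteq> 0" unfolding P_def using assms by (auto intro!: qfact_nonzero)
  moreover have "qbinomial Y a (l + j) * qbinomial Y (l + j) j * P
      = qbinomial Y a (l + j) * (qbinomial Y (l + j) j * qfact Y j * qfact Y l) * qfact Y (a - (l + j))"
    by (simp add: P_def algebra_simps)
  moreover have "\<dots> = qfact Y a"
    using qbinomial_qfact[of j "l + j" Y] qbinomial_qfact[of "l + j" a Y] assms(2) by simp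
  moreover have "qbinomial Y a j * qbinomial Y (a - j) l * P
      = qbinomial Y a j * qfact Y j * (qbinomial Y (a - j) l * qfact Y l * qfact Y (a - j - l))"
    by (simp add: P_def algebra_simps)
  moreover have "\<dots> = qfact Y a"
    using qbinomial_qfact[of l "a - j" Y] qbinomial_qfact[of j a Y] assms(2) by simp
  ultimately show ?thesis by (metis mult_right_cancel)
qed

section \<open>The Igusa function\<close>

lemma gmulti_list_shift:
  fixes Y :: "'a::field"
  assumes "sorted_wrt (>) L" "\<forall>x\<in>set L. x + j \<le> a" "j \<le> a" "\<forall>i\<in>{1..a}. Y ^ i \<noteq> 1"
  shows "gmulti_list a (map (\<lambda>x. x + j) L @ [j]) Y = qbinomial Y a j * gmulti_list (a - j) L Y"
  using assms
proof (induction L arbitrary: a)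
  case Nil
  then show ?case by (simp add: gbinom_eq_qbinomial)
next
  case (Cons l L)
  have Y: "\<forall>i\<in>{1..l + j}. Y ^ i \<noteq> 1" "\<forall>i\<in>{1..a - j}. Y ^ i \<noteq> 1"
    using Cons.prems by auto
  have L: "\<forall>x\<in>set L. x + j \<le> l + j" using Cons.prems(1) by auto
  have l: "l \<le> a - j" using Cons.prems(2) by auto
  have "gmulti_list a (map (\<lambda>x. x + j) (l # L) @ [j]) Y
      = gbinom a (l + j) Y * gmulti_list (l + j) (map (\<lambda>x. x + j) L @ [j]) Y"
    by simp
  also have "\<dots> = qbinomial Y a (l + j) * (qbinomial Y (l + j) j * gmulti_list l L Y)"
    using Cons.IH[OF _ L _ Y(1)] Cons.prems by (simp add: gbinom_eq_qbinomial)
  also have "\<dots> = qbinomial Y a j * (qbinomial Y (a - j) l * gmulti_list l L Y)"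
    using qbinomial_mult_qbinomial[of a Y l j] Cons.prems by (simp add: mult.assoc[symmetric])
  also have "\<dots> = qbinomial Y a j * gmulti_list (a - j) (l # L) Y"
    using gbinom_eq_qbinomial[OF Y(2) l] by simp
  finally show ?case .
qed

lemma sorted_list_of_set_insert_shift:
  fixes J :: "nat set"
  assumes "finite J" "\<forall>x\<in>J. 1 \<le> x"
  shows "sorted_list_of_set (insert j ((\<lambda>x. x + j) ` J)) = j # map (\<lambda>x. x + j) (sorted_list_of_set J)"
proof -
  have "j \<notin> (\<lambda>x. x + j) ` J" using assms(2) by force
  then have "sorted_wrt (<) (j # map (\<lambda>x. x + j) (sorted_list_of_set J))
    \<and> set (j # map (\<lambda>x. x + j) (sorted_list_of_set J)) = insert j ((\<lambda>x. x + j) ` J)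
    \<and> length (j # map (\<lambda>x. x + j) (sorted_list_of_set J)) = card (insert j ((\<lambda>x. x + j) ` J))"
    using assms by (auto simp: sorted_wrt_map card_image)
  then show ?thesis using sorted_list_of_set_unique assms(1) by (metis finite_imageI finite_insert)
qed

lemma gmulti_insert_shift:
  fixes Y :: "'a::field"
  assumes "J \<subseteq> {1..m - j}" "j \<le> m" "\<forall>i\<in>{1..m}. Y ^ i \<noteq> 1"
  shows "gmulti m (insert j ((\<lambda>x. x + j) ` J)) Y = qbinomial Y m j * gmulti (m - j) J Y"
proof -
  have J: "finite J" "\<forall>x\<in>J. 1 \<le> x" using assms(1) finite_subset by auto
  have "rev (sorted_list_of_set (insert j ((\<lambda>x. x + j) ` J)))
      = map (\<lambda>x. x + j) (rev (sorted_list_of_set J)) @ [j]"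
    using sorted_list_of_set_insert_shift[OF J] by (simp add: rev_map)
  moreover have "\<forall>x\<in>set (rev (sorted_list_of_set J)). x + j \<le> m"
    using assms J(1) by (force simp: subset_iff)
  ultimately show ?thesis
    unfolding gmulti_def using gmulti_list_shift[of _ j m Y] assms by (simp add: sorted_wrt_rev)
qed

lemma nonempty_subsets_with_Min:
  fixes j m :: nat
  assumes "j \<in> {1..m}"
  shows "{I \<in> Pow {1..m} - {{}}. Min I = j} = (\<lambda>J. insert j ((\<lambda>x. x + j) ` J)) ` Pow {1..m - j}"
proof (intro equalityI subsetI)
  fix I assume "I \<in> {I \<in> Pow {1..m} - {{}}. Min I = j}"
  then have I: "I \<subseteq> {1..m}" "I \<noteq> {}" "Min I = j" by auto
  have fin: "finite I" by (rule finite_subset[OF I(1)]) simp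
  have jI: "j \<in> I" using Min_in[OF fin I(2)] I(3) by simp
  have ge: "\<forall>x\<in>I. j \<le> x" using Min_le[OF fin] I(3) by blast
  define J where "J = (\<lambda>x. x - j) ` (I - {j})"
  have "(\<lambda>x. x + j) ` J = (\<lambda>x. x) ` (I - {j})"
    unfolding J_def image_image by (rule image_cong) (use ge in auto)
  then have "I = insert j ((\<lambda>x. x + j) ` J)" using jI by auto
  moreover have "J \<subseteq> {1..m - j}" unfolding J_def using I(1) ge by force
  ultimately show "I \<in> (\<lambda>J. insert j ((\<lambda>x. x + j) ` J)) ` Pow {1..m - j}" by blast
next
  fix I assume "I \<in> (\<lambda>J. insert j ((\<lambda>x. x + j) ` J)) ` Pow {1..m - j}"
  then obtain J where J: "J \<subseteq> {1..m - j}" "I = insert j ((\<lambda>x. x + j) ` J)" by auto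
  then have "I \<subseteq> {1..m}" using assms by force
  moreover have "Min I = j"
    using J calculation by (intro Min_eqI) (auto intro: finite_subset)
  ultimately show "I \<in> {I \<in> Pow {1..m} - {{}}. Min I = j}" using J(2) by auto
qed

lemma inj_on_insert_shift:
  fixes j :: nat
  shows "inj_on (\<lambda>J. insert j ((\<lambda>x. x + j) ` J)) {J. \<forall>x\<in>J. 1 \<le> x}"
proof (rule inj_onI)
  fix A B assume AB: "A \<in> {J. \<forall>x\<in>J. 1 \<le> x}" "B \<in> {J. \<forall>x\<in>J. 1 \<le> x}"
    and eq: "insert j ((\<lambda>x. x + j) ` A) = insert j ((\<lambda>x. x + j) ` B)"
  have "j \<notin> (\<lambda>x. x + j) ` A" "j \<notin> (\<lambda>x. x + j) ` B" using AB by (auto simp: image_iff)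
  then have "(\<lambda>x. x + j) ` A = (\<lambda>x. x + j) ` B" using eq by (simp add: insert_ident)
  then show "A = B" by (simp add: inj_image_eq_iff)
qed

lemma igusa_Min_recursion:
  fixes Y :: "'a::field"
  assumes Y: "\<forall>i\<in>{1..m}. Y ^ i \<noteq> 1"
  shows "igusa m Y W
    = 1 + (\<Sum>j = 1..m. qbinomial Y m j * (W j / (1 - W j)) * igusa (m - j) Y (\<lambda>i. W (i + j)))"
proof -
  define g where "g I = gmulti m I Y * (\<Prod>i\<in>I. W i / (1 - W i))" for I
  have "igusa m Y W = g {} + sum g (Pow {1..m} - {{}})"
    unfolding igusa_def g_def by (subst sum.remove[of _ "{}"]) auto
  also have "g {} = 1" unfolding g_def gmulti_def by simp
  also have "sum g (Pow {1..m} - {{}}) = (\<Sum>j = 1..m. sum g {I \<in> Pow {1..m} - {{}}. Min I = j})"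
  proof (rule sum.group[symmetric])
    show "Min ` (Pow {1..m} - {{}}) \<subseteq> {1..m}"
    proof
      fix x assume "x \<in> Min ` (Pow {1..m} - {{}})"
      then obtain I where I: "I \<subseteq> {1..m}" "I \<noteq> {}" "x = Min I" by auto
      moreover have "finite I" by (rule finite_subset[OF I(1)]) simp
      ultimately show "x \<in> {1..m}" using Min_in by blast
    qed
  qed auto
  also have "\<dots> = (\<Sum>j = 1..m. qbinomial Y m j * (W j / (1 - W j)) * igusa (m - j) Y (\<lambda>i. W (i + j)))"
  proof (rule sum.cong[OF refl])
    fix j assume j: "j \<in> {1..m}"
    have inj: "inj_on (\<lambda>J. insert j ((\<lambda>x. x + j) ` J)) (Pow {1..m - j})"
      by (rule inj_on_subset[OF inj_on_insert_shift]) auto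
    have "g (insert j ((\<lambda>x. x + j) ` J))
        = qbinomial Y m j * (W j / (1 - W j)) * (gmulti (m - j) J Y * (\<Prod>i\<in>J. W (i + j) / (1 - W (i + j))))"
      if J: "J \<subseteq> {1..m - j}" for J
    proof -
      have "j \<notin> (\<lambda>x. x + j) ` J" "finite J" using J by (auto intro: finite_subset)
      then have "(\<Prod>i\<in>insert j ((\<lambda>x. x + j) ` J). W i / (1 - W i))
          = W j / (1 - W j) * (\<Prod>i\<in>J. W (i + j) / (1 - W (i + j)))"
        by (simp add: prod.reindex)
      then show ?thesis
        unfolding g_def using gmulti_insert_shift[OF J _ Y] j by (simp add: algebra_simps)
    qed
    then show "sum g {I \<in> Pow {1..m} - {{}}. Min I = j}
        = qbinomial Y m j * (W j / (1 - W j)) * igusa (m - j) Y (\<lambda>i. W (i + j))"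
      unfolding nonempty_subsets_with_Min[OF j] sum.reindex[OF inj] igusa_def
      by (simp add: sum_distrib_left)
  qed
  finally show ?thesis .
qed

section \<open>Columns\<close>

lemma entry_in: "finite C \<Longrightarrow> i < card C \<Longrightarrow> entry C i \<in> C"
  unfolding entry_def by (metis length_sorted_list_of_set nth_mem set_sorted_list_of_set)

lemma entry_strict_mono: "finite C \<Longrightarrow> i < j \<Longrightarrow> j < card C \<Longrightarrow> entry C i < entry C j"
  unfolding entry_def
  by (metis length_sorted_list_of_set sorted_wrt_nth_less strict_sorted_list_of_set)

lemma entry_surj: "finite C \<Longrightarrow> x \<in> C \<Longrightarrow> \<exists>i < card C. entry C i = x"
  unfolding entry_def by (metis in_set_conv_nth length_sorted_list_of_set set_sorted_list_of_set)

lemma card_inter_entry_atLeastAtMost: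
  assumes "finite C" "i < card C" "\<forall>y\<in>C. y \<le> N"
  shows "card (C \<inter> {entry C i..N}) = card C - i"
proof -
  have "C \<inter> {entry C i..N} = entry C ` {i..<card C}"
  proof (intro equalityI subsetI)
    fix x assume x: "x \<in> C \<inter> {entry C i..N}"
    then obtain p where p: "p < card C" "entry C p = x" using entry_surj assms(1) by blast
    then have "\<not> p < i" using x entry_strict_mono[OF assms(1) _ assms(2)] by fastforce
    then show "x \<in> entry C ` {i..<card C}" using p by auto
  next
    fix x assume "x \<in> entry C ` {i..<card C}"
    then obtain p where p: "i \<le> p" "p < card C" "x = entry C p" by auto
    then have "entry C i \<le> entry C p" using entry_strict_mono[OF assms(1), of i p] by (cases "i = p") auto
    then show "x \<in> C \<inter> {entry C i..N}" using p entry_in[OF assms(1)] assms(3) by auto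
  qed
  moreover have "inj_on (entry C) {i..<card C}"
    by (rule inj_onI) (metis atLeastLessThan_iff entry_strict_mono[OF assms(1)] less_irrefl nat_neq_iff)
  ultimately show ?thesis by (simp add: card_image)
qed

lemma sorted_list_of_set_insert_max:
  assumes "finite C" "\<forall>y\<in>C. y < x"
  shows "sorted_list_of_set (insert x C) = sorted_list_of_set C @ [x]"
proof -
  have "x \<notin> C" using assms by auto
  then have "sorted_wrt (<) (sorted_list_of_set C @ [x])
    \<and> set (sorted_list_of_set C @ [x]) = insert x C
    \<and> length (sorted_list_of_set C @ [x]) = card (insert x C)"
    using assms by (simp add: sorted_wrt_append)
  then show ?thesis using sorted_list_of_set_unique assms(1) by (metis finite_insert)
qed

lemma card_insert_Suc_max: "C \<subseteq> {1..m} \<Longrightarrow> card (insert (Suc m) C) = Suc (card C)"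
  using finite_subset[of C "{1..m}"] by (subst card_insert_disjoint) auto

lemma entry_insert_Suc_max:
  assumes "C \<subseteq> {1..m}"
  shows "i < card C \<Longrightarrow> entry (insert (Suc m) C) i = entry C i"
    and "entry (insert (Suc m) C) (card C) = Suc m"
proof -
  have "finite C" "\<forall>y\<in>C. y < Suc m" using assms finite_subset by auto
  then show "i < card C \<Longrightarrow> entry (insert (Suc m) C) i = entry C i"
    and "entry (insert (Suc m) C) (card C) = Suc m"
    unfolding entry_def by (subst sorted_list_of_set_insert_max; simp add: nth_append)+
qed

lemma entry_le_bound: "C \<subseteq> {1..m} \<Longrightarrow> i < card C \<Longrightarrow> entry C i \<le> m"
  using entry_in[of C i] finite_subset[of C "{1..m}"] by auto

definition column_le :: "nat set \<Rightarrow> nat set \<Rightarrow> bool" where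
  "column_le C D \<longleftrightarrow> card D \<le> card C \<and> (\<forall>i < card D. entry C i \<le> entry D i)"

text \<open>The factor of \<open>\<Phi>\<^sub>T\<close> contributed by a column \<open>C\<close> immediately followed by \<open>D\<close>.\<close>

definition leg_weight :: "'a::comm_ring_1 \<Rightarrow> nat set \<Rightarrow> nat set \<Rightarrow> 'a" where
  "leg_weight Y C D = (\<Prod>i \<in> {i. i < card D \<and> entry D i \<notin> C}. 1 - Y ^ card (C \<inter> {entry C i..entry D i}))"

lemma leg_weight_self:
  assumes "finite D"
  shows "leg_weight Y D D = 1"
proof -
  have no_rows: "{i. i < card D \<and> entry D i \<notin> D} = {}" using entry_in[OF assms] by auto
  show ?thesis unfolding leg_weight_def no_rows by simp
qed

definition excess :: "nat set \<Rightarrow> nat" where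
  "excess C = \<Sum>C - (card C + 1 choose 2)"

lemma column_le_refl: "column_le C C"
  unfolding column_le_def by simp

lemma column_le_trans: "column_le A B \<Longrightarrow> column_le B C \<Longrightarrow> column_le A C"
  unfolding column_le_def by (meson le_trans order_less_le_trans)

lemma column_le_antisym:
  assumes "finite A" "finite B" "column_le A B" "column_le B A"
  shows "A = B"
proof -
  have "sorted_list_of_set A = sorted_list_of_set B"
    using assms(3,4) unfolding column_le_def entry_def by (intro nth_equalityI) (auto intro: antisym)
  then show ?thesis using assms(1,2) by (metis set_sorted_list_of_set)
qed

lemma column_le_insert_left:
  assumes C: "C \<subseteq> {1..m}" and D: "D \<subseteq> {1..m}"
  shows "column_le (insert (Suc m) C) D \<longleftrightarrow> card D \<le> card C \<and> column_le C D"
proof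
  assume le: "column_le (insert (Suc m) C) D"
  have "card D \<noteq> Suc (card C)"
  proof
    assume "card D = Suc (card C)"
    then have "entry (insert (Suc m) C) (card C) \<le> entry D (card C)"
      using le unfolding column_le_def by simp
    then show False using entry_insert_Suc_max(2)[OF C] entry_le_bound[OF D, of "card C"] \<open>card D = _\<close>
      by simp
  qed
  then show "card D \<le> card C \<and> column_le C D"
    using le card_insert_Suc_max[OF C] entry_insert_Suc_max(1)[OF C]
    unfolding column_le_def by auto
next
  assume "card D \<le> card C \<and> column_le C D"
  then show "column_le (insert (Suc m) C) D"
    using card_insert_Suc_max[OF C] entry_insert_Suc_max(1)[OF C] unfolding column_le_def by auto
qed

lemma column_le_insert_right:
  assumes C: "C \<subseteq> {1..m}" and D: "D \<subseteq> {1..m}" and "card D < card C"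
  shows "column_le C (insert (Suc m) D) \<longleftrightarrow> column_le C D"
proof -
  have "entry C (card D) \<le> Suc m" using entry_le_bound[OF C assms(3)] by simp
  then show ?thesis
    using assms card_insert_Suc_max[OF D] entry_insert_Suc_max[OF D]
    unfolding column_le_def by (auto simp: less_Suc_eq)
qed

lemma column_le_insert_both:
  assumes C: "C \<subseteq> {1..m}" and D: "D \<subseteq> {1..m}"
  shows "column_le (insert (Suc m) C) (insert (Suc m) D) \<longleftrightarrow> column_le C D"
proof -
  have "entry (insert (Suc m) C) (card D) \<le> Suc m" if "card D \<le> card C"
    using that entry_insert_Suc_max[OF C] entry_le_bound[OF C, of "card D"]
    by (cases "card D = card C") auto
  then show ?thesis
    using card_insert_Suc_max[OF C] card_insert_Suc_max[OF D]
      entry_insert_Suc_max[OF C] entry_insert_Suc_max[OF D]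
    unfolding column_le_def by (auto simp: less_Suc_eq)
qed

lemma leg_weight_insert_left:
  assumes C: "C \<subseteq> {1..m}" and D: "D \<subseteq> {1..m}" and "card D \<le> card C"
  shows "leg_weight Y (insert (Suc m) C) D = leg_weight Y C D"
  unfolding leg_weight_def
proof (rule prod.cong)
  show "{i. i < card D \<and> entry D i \<notin> insert (Suc m) C} = {i. i < card D \<and> entry D i \<notin> C}"
    using entry_le_bound[OF D] by fastforce
next
  fix i assume "i \<in> {i. i < card D \<and> entry D i \<notin> C}"
  then have i: "i < card D" by simp
  then have "insert (Suc m) C \<inter> {entry C i..entry D i} = C \<inter> {entry C i..entry D i}"
    and "entry (insert (Suc m) C) i = entry C i"
    using entry_le_bound[OF D i] entry_insert_Suc_max(1)[OF C] assms(3) by auto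
  then show "1 - Y ^ card (insert (Suc m) C \<inter> {entry (insert (Suc m) C) i..entry D i})
      = 1 - Y ^ card (C \<inter> {entry C i..entry D i})" by simp
qed

lemma leg_weight_insert_both:
  assumes C: "C \<subseteq> {1..m}" and D: "D \<subseteq> {1..m}" and "card D \<le> card C"
  shows "leg_weight Y (insert (Suc m) C) (insert (Suc m) D) = leg_weight Y C D"
  unfolding leg_weight_def
proof (rule prod.cong)
  show "{i. i < card (insert (Suc m) D) \<and> entry (insert (Suc m) D) i \<notin> insert (Suc m) C}
      = {i. i < card D \<and> entry D i \<notin> C}"
    using card_insert_Suc_max[OF D] entry_insert_Suc_max[OF D] entry_le_bound[OF D]
    by (auto simp: less_Suc_eq) (metis Suc_n_not_le_n)
next
  fix i assume "i \<in> {i. i < card D \<and> entry D i \<notin> C}"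
  then have i: "i < card D" by simp
  then have "insert (Suc m) C \<inter> {entry C i..entry D i} = C \<inter> {entry C i..entry D i}"
    and "entry (insert (Suc m) C) i = entry C i" "entry (insert (Suc m) D) i = entry D i"
    using entry_le_bound[OF D i] entry_insert_Suc_max(1)[OF C] entry_insert_Suc_max(1)[OF D] assms(3)
    by auto
  then show "1 - Y ^ card (insert (Suc m) C \<inter> {entry (insert (Suc m) C) i..entry (insert (Suc m) D) i})
      = 1 - Y ^ card (C \<inter> {entry C i..entry D i})" by simp
qed

text \<open>The new cell of \<open>D\<close> lies in row \<open>card D\<close>; its leg consists of the entries
  \<open>card D, \<dots>, card C - 1\<close> of \<open>C\<close>.\<close>

lemma leg_weight_insert_right:
  assumes C: "C \<subseteq> {1..m}" and D: "D \<subseteq> {1..m}" and less: "card D < card C"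
  shows "leg_weight Y C (insert (Suc m) D) = (1 - Y ^ (card C - card D)) * leg_weight Y C D"
proof -
  have rows: "{i. i < card (insert (Suc m) D) \<and> entry (insert (Suc m) D) i \<notin> C}
      = insert (card D) {i. i < card D \<and> entry D i \<notin> C}"
    using card_insert_Suc_max[OF D] entry_insert_Suc_max[OF D] C by (auto simp: less_Suc_eq)
  have "card (C \<inter> {entry C (card D)..Suc m}) = card C - card D"
    using C finite_subset[OF C] by (intro card_inter_entry_atLeastAtMost less) auto
  then show ?thesis
    unfolding leg_weight_def rows using entry_insert_Suc_max[OF D]
    by (subst prod.insert) (auto intro!: prod.cong)
qed

lemma triangular_le_sum: "C \<subseteq> {1..m} \<Longrightarrow> (card C + 1 choose 2) \<le> \<Sum>C"
proof (induction m arbitrary: C)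
  case 0 then show ?case by auto
next
  case (Suc m)
  show ?case
  proof (cases "Suc m \<in> C")
    case False
    then have "C \<subseteq> {1..m}" using Suc.prems by (auto simp: le_Suc_eq)
    then show ?thesis using Suc.IH by blast
  next
    case True
    define C' where "C' = C - {Suc m}"
    have C': "C' \<subseteq> {1..m}" "C = insert (Suc m) C'"
      using Suc.prems True unfolding C'_def by (auto simp: le_Suc_eq)
    have "card C' \<le> m" "Suc m \<notin> C'" using card_mono[OF _ C'(1)] C'(1) by auto
    then show ?thesis
      using Suc.IH[OF C'(1)] C' card_insert_Suc_max[OF C'(1)] finite_subset[OF C'(1)]
      by (simp add: numeral_2_eq_2)
  qed
qed

lemma excess_insert_Suc_max:
  assumes C: "C \<subseteq> {1..m}"
  shows "excess (insert (Suc m) C) = excess C + (m - card C)"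
proof -
  have "card C \<le> m" "Suc m \<notin> C" using card_mono[OF _ C] C by auto
  then show ?thesis
    using triangular_le_sum[OF C] card_insert_Suc_max[OF C] finite_subset[OF C]
    unfolding excess_def by (auto simp: numeral_2_eq_2)
qed

lemma schubert_dim_complement:
  assumes "C \<subseteq> {1..n}"
  shows "schubert_dim n ({1..n} - C) = excess C"
proof -
  have "card C \<le> n" using card_mono[OF _ assms] by simp
  then show ?thesis
    using assms unfolding schubert_dim_def excess_def
    by (simp add: Diff_Diff_Int Int_absorb1 card_Diff_subset finite_subset)
qed

section \<open>Summing over the columns that may precede a given one\<close>

lemma sum_subsets_atLeastAtMost_Suc:
  "(\<Sum>C | C \<subseteq> {1..Suc m} \<and> P C. g C)
    = (\<Sum>C | C \<subseteq> {1..m} \<and> P C. g C)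
      + (\<Sum>C | C \<subseteq> {1..m} \<and> P (insert (Suc m) C). g (insert (Suc m) C))"
proof -
  let ?A = "{C. C \<subseteq> {1..m} \<and> P C}" and ?B = "{C. C \<subseteq> {1..m} \<and> P (insert (Suc m) C)}"
  have "{C. C \<subseteq> {1..Suc m} \<and> P C} = ?A \<union> insert (Suc m) ` ?B"
  proof (intro equalityI subsetI)
    fix C assume C: "C \<in> {C. C \<subseteq> {1..Suc m} \<and> P C}"
    show "C \<in> ?A \<union> insert (Suc m) ` ?B"
    proof (cases "Suc m \<in> C")
      case True
      then have "C = insert (Suc m) (C - {Suc m})" by auto
      moreover have "C - {Suc m} \<in> ?B"
        using C by (auto simp: le_Suc_eq insert_absorb[OF True])
      ultimately show ?thesis by blast
    next
      case False
      then show ?thesis using C by (auto simp: le_Suc_eq)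
    qed
  next
    fix C assume "C \<in> ?A \<union> insert (Suc m) ` ?B"
    then show "C \<in> {C. C \<subseteq> {1..Suc m} \<and> P C}" by auto
  qed
  moreover have "inj_on (insert (Suc m)) ?B"
  proof (rule inj_onI)
    fix A B assume "A \<in> ?B" "B \<in> ?B" "insert (Suc m) A = insert (Suc m) B"
    moreover have "Suc m \<notin> A" "Suc m \<notin> B" using calculation(1,2) by auto
    ultimately show "A = B" by (simp add: insert_ident)
  qed
  moreover have "?A \<inter> insert (Suc m) ` ?B = {}" by auto
  moreover have "finite ?A" "finite ?B"
    by (rule finite_subset[of _ "Pow {1..m}"]; auto)+
  ultimately show ?thesis by (simp add: sum.union_disjoint sum.reindex)
qed

definition lower_sum :: "'a::comm_ring_1 \<Rightarrow> nat \<Rightarrow> nat set \<Rightarrow> nat \<Rightarrow> 'a" where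
  "lower_sum Y n D k = (\<Sum>C | C \<subseteq> {1..n} \<and> card C = k \<and> column_le C D. Y ^ excess C * leg_weight Y C D)"

lemma lower_sum_Suc:
  assumes D: "D \<subseteq> {1..m}" and "card D \<le> k"
  shows "lower_sum Y (Suc m) D k
    = lower_sum Y m D k + (if card D < k then Y ^ (Suc m - k) * lower_sum Y m D (k - 1) else 0)"
proof -
  have "(\<Sum>C | C \<subseteq> {1..m} \<and> card (insert (Suc m) C) = k \<and> column_le (insert (Suc m) C) D.
          Y ^ excess (insert (Suc m) C) * leg_weight Y (insert (Suc m) C) D)
      = (\<Sum>C | C \<subseteq> {1..m} \<and> card C = k - 1 \<and> card D < k \<and> column_le C D.
          Y ^ (Suc m - k) * (Y ^ excess C * leg_weight Y C D))"
  proof (rule sum.cong)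
    show "{C. C \<subseteq> {1..m} \<and> card (insert (Suc m) C) = k \<and> column_le (insert (Suc m) C) D}
        = {C. C \<subseteq> {1..m} \<and> card C = k - 1 \<and> card D < k \<and> column_le C D}"
      using assms(2) card_insert_Suc_max column_le_insert_left[OF _ D] by fastforce
  next
    fix C assume "C \<in> {C. C \<subseteq> {1..m} \<and> card C = k - 1 \<and> card D < k \<and> column_le C D}"
    then have C: "C \<subseteq> {1..m}" "card D \<le> card C" and "m - card C = Suc m - k" by auto
    then show "Y ^ excess (insert (Suc m) C) * leg_weight Y (insert (Suc m) C) D
        = Y ^ (Suc m - k) * (Y ^ excess C * leg_weight Y C D)"
      unfolding excess_insert_Suc_max[OF C(1)] leg_weight_insert_left[OF C(1) D C(2)]
      by (simp add: power_add algebra_simps)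
  qed
  then show ?thesis
    unfolding lower_sum_def sum_subsets_atLeastAtMost_Suc
    by (cases "card D < k") (simp_all add: sum_distrib_left)
qed

lemma lower_sum_Suc_insert:
  assumes D: "D \<subseteq> {1..m}" and less: "card D < k"
  shows "lower_sum Y (Suc m) (insert (Suc m) D) k
    = (1 - Y ^ (k - card D)) * lower_sum Y m D k + Y ^ (Suc m - k) * lower_sum Y m D (k - 1)"
proof -
  have "(\<Sum>C | C \<subseteq> {1..m} \<and> card C = k \<and> column_le C (insert (Suc m) D).
          Y ^ excess C * leg_weight Y C (insert (Suc m) D))
      = (\<Sum>C | C \<subseteq> {1..m} \<and> card C = k \<and> column_le C D.
          (1 - Y ^ (k - card D)) * (Y ^ excess C * leg_weight Y C D))"
  proof (rule sum.cong)
    show "{C. C \<subseteq> {1..m} \<and> card C = k \<and> column_le C (insert (Suc m) D)}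
        = {C. C \<subseteq> {1..m} \<and> card C = k \<and> column_le C D}"
      using less column_le_insert_right[OF _ D] by auto
  next
    fix C assume "C \<in> {C. C \<subseteq> {1..m} \<and> card C = k \<and> column_le C D}"
    then have C: "C \<subseteq> {1..m}" "card D < card C" "card C = k" using less by auto
    then show "Y ^ excess C * leg_weight Y C (insert (Suc m) D)
        = (1 - Y ^ (k - card D)) * (Y ^ excess C * leg_weight Y C D)"
      unfolding leg_weight_insert_right[OF C(1) D C(2)] C(3) by (simp add: algebra_simps)
  qed
  moreover have "(\<Sum>C | C \<subseteq> {1..m} \<and> card (insert (Suc m) C) = k
                    \<and> column_le (insert (Suc m) C) (insert (Suc m) D).
          Y ^ excess (insert (Suc m) C) * leg_weight Y (insert (Suc m) C) (insert (Suc m) D))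
      = (\<Sum>C | C \<subseteq> {1..m} \<and> card C = k - 1 \<and> column_le C D.
          Y ^ (Suc m - k) * (Y ^ excess C * leg_weight Y C D))"
  proof (rule sum.cong)
    show "{C. C \<subseteq> {1..m} \<and> card (insert (Suc m) C) = k
                \<and> column_le (insert (Suc m) C) (insert (Suc m) D)}
        = {C. C \<subseteq> {1..m} \<and> card C = k - 1 \<and> column_le C D}"
      using less card_insert_Suc_max column_le_insert_both[OF _ D] by fastforce
  next
    fix C assume "C \<in> {C. C \<subseteq> {1..m} \<and> card C = k - 1 \<and> column_le C D}"
    then have C: "C \<subseteq> {1..m}" "card D \<le> card C" and "m - card C = Suc m - k"
      using less by (auto simp: column_le_def)
    then show "Y ^ excess (insert (Suc m) C) * leg_weight Y (insert (Suc m) C) (insert (Suc m) D)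
        = Y ^ (Suc m - k) * (Y ^ excess C * leg_weight Y C D)"
      unfolding excess_insert_Suc_max[OF C(1)] leg_weight_insert_both[OF C(1) D C(2)]
      by (simp add: power_add algebra_simps)
  qed
  ultimately show ?thesis
    unfolding lower_sum_def sum_subsets_atLeastAtMost_Suc by (simp add: sum_distrib_left)
qed

lemma lower_sum_eq_qbinomial:
  "D \<subseteq> {1..n} \<Longrightarrow> card D \<le> k \<Longrightarrow> lower_sum Y n D k = qbinomial Y (n - card D) (k - card D)"
proof (induction n arbitrary: D k)
  case 0
  then have "D = {}" by auto
  then have "{C. C \<subseteq> {1..0} \<and> card C = k \<and> column_le C D} = (if k = 0 then {{}} else {})"
    by (auto simp: column_le_def)
  then show ?case
    unfolding lower_sum_def by (simp add: excess_def leg_weight_def qbinomial_eq_0 \<open>D = {}\<close>)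
next
  case (Suc m)
  show ?case
  proof (cases "Suc m \<in> D")
    case False
    then have D: "D \<subseteq> {1..m}" using Suc.prems by (auto simp: le_Suc_eq)
    have d: "card D \<le> m" using card_mono[OF _ D] by simp
    show ?thesis
    proof (cases "card D < k")
      case True
      define M r where "M = m - card D" and "r = k - 1 - card D"
      have idx: "Suc m - card D = Suc M" "k - card D = Suc r" "k - 1 - card D = r"
        using True d by (auto simp: M_def r_def)
      have "lower_sum Y (Suc m) D k = lower_sum Y m D k + Y ^ (Suc m - k) * lower_sum Y m D (k - 1)"
        using lower_sum_Suc[OF D Suc.prems(2), of Y] True by simp
      also have "\<dots> = qbinomial Y M (Suc r) + Y ^ (Suc m - k) * qbinomial Y M r"
        using Suc.IH[OF D, of k] Suc.IH[OF D, of "k - 1"] True idx by (simp add: M_def)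
      also have "\<dots> = qbinomial Y (Suc M) (Suc r)"
        using True d by (cases "r \<le> M") (auto simp: M_def r_def qbinomial_eq_0)
      finally show ?thesis using idx by simp
    next
      case False
      then show ?thesis
        using lower_sum_Suc[OF D Suc.prems(2), of Y] Suc.IH[OF D] Suc.prems(2) d by simp
    qed
  next
    case True
    define D' where "D' = D - {Suc m}"
    have D': "D' \<subseteq> {1..m}" "D = insert (Suc m) D'"
      using Suc.prems True by (auto simp: D'_def le_Suc_eq)
    have d: "card D = Suc (card D')" "card D' \<le> m" "card D' < k"
      using card_insert_Suc_max[OF D'(1)] card_mono[OF _ D'(1)] D' Suc.prems(2) by auto
    define M r where "M = m - card D'" and "r = k - card D"
    have idx: "k - card D' = Suc r" "k - 1 - card D' = r" "Suc m - card D = M"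
      using d Suc.prems(2) by (auto simp: M_def r_def)
    have "lower_sum Y (Suc m) D k
        = (1 - Y ^ Suc r) * lower_sum Y m D' k + Y ^ (Suc m - k) * lower_sum Y m D' (k - 1)"
      using lower_sum_Suc_insert[OF D'(1) d(3), of Y] D'(2) idx by simp
    also have "\<dots> = (1 - Y ^ Suc r) * qbinomial Y M (Suc r) + Y ^ (Suc m - k) * qbinomial Y M r"
      using Suc.IH[OF D'(1), of k] Suc.IH[OF D'(1), of "k - 1"] d idx by (simp add: M_def)
    also have "\<dots> = ((1 - Y ^ (M - r)) + Y ^ (Suc m - k)) * qbinomial Y M r"
      unfolding qbinomial_Suc_ratio by (simp add: algebra_simps)
    also have "\<dots> = qbinomial Y M r"
      using d Suc.prems(2) by (cases "r \<le> M") (auto simp: M_def r_def qbinomial_eq_0)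
    finally show ?thesis using idx by (simp add: r_def)
  qed
qed

lemma sum_column_le_by_card:
  assumes D: "D \<subseteq> {1..n}"
  shows "(\<Sum>C | C \<subseteq> {1..n} \<and> column_le C D. Y ^ excess C * leg_weight Y C D * f (card C))
    = (\<Sum>k = card D..n. qbinomial Y (n - card D) (k - card D) * f k)"
proof -
  have "(\<Sum>C | C \<subseteq> {1..n} \<and> column_le C D. Y ^ excess C * leg_weight Y C D * f (card C))
      = (\<Sum>k = card D..n. \<Sum>C | C \<in> {C. C \<subseteq> {1..n} \<and> column_le C D} \<and> card C = k.
            Y ^ excess C * leg_weight Y C D * f (card C))"
  proof (rule sum.group[symmetric])
    show "card ` {C. C \<subseteq> {1..n} \<and> column_le C D} \<subseteq> {card D..n}"
      using card_mono[of "{1..n}"] by (auto simp: column_le_def)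
    show "finite {C. C \<subseteq> {1..n} \<and> column_le C D}"
      by (rule finite_subset[of _ "Pow {1..n}"]) auto
  qed simp
  also have "\<dots> = (\<Sum>k = card D..n. lower_sum Y n D k * f k)"
    unfolding lower_sum_def sum_distrib_right by (intro sum.cong refl) (auto intro: arg_cong2)
  also have "\<dots> = (\<Sum>k = card D..n. qbinomial Y (n - card D) (k - card D) * f k)"
    by (intro sum.cong refl) (simp add: lower_sum_eq_qbinomial[OF D])
  finally show ?thesis .
qed

section \<open>Reduced tableaux as chains of columns\<close>

definition columns :: "nat \<Rightarrow> nat set set" where
  "columns n = {D. D \<noteq> {} \<and> D \<subseteq> {1..n}}"

definition column_less :: "nat set \<Rightarrow> nat set \<Rightarrow> bool" where
  "column_less C D \<longleftrightarrow> column_le C D \<and> C \<noteq> D"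

lemma finite_columns: "finite (columns n)"
  by (rule finite_subset[of _ "Pow {1..n}"]) (auto simp: columns_def)

lemma finite_if_columns: "C \<in> columns n \<Longrightarrow> finite C"
  unfolding columns_def using finite_subset by auto

lemma column_less_trans:
  assumes "finite A" "finite B" "column_less A B" "column_less B C"
  shows "column_less A C"
  using assms column_le_trans column_le_antisym unfolding column_less_def by blast

lemma wf_column_less: "wf {(C, D). C \<in> columns n \<and> D \<in> columns n \<and> column_less C D}"
  (is "wf ?R")
proof (rule finite_acyclic_wf)
  show "finite ?R"
    by (rule finite_subset[of _ "columns n \<times> columns n"]) (auto simp: finite_columns)
  have "trans ?R"
    by (auto intro!: transI) (meson column_less_trans finite_if_columns)
  then show "acyclic ?R"
    by (simp add: acyclic_irrefl irrefl_def column_less_def)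
qed

lemma successively_conv_nth:
  "successively P xs \<longleftrightarrow> (\<forall>i. Suc i < length xs \<longrightarrow> P (xs ! i) (xs ! Suc i))"
proof (induction xs rule: induct_list012)
  case (3 x y zs)
  have "(\<forall>i. Suc i < length (x # y # zs) \<longrightarrow> P ((x # y # zs) ! i) ((x # y # zs) ! Suc i))
      \<longleftrightarrow> P x y \<and> (\<forall>i. Suc i < length (y # zs) \<longrightarrow> P ((y # zs) ! i) ((y # zs) ! Suc i))"
    by (auto simp: All_less_Suc2 less_Suc_eq_0_disj)
  then show ?case using "3.IH"(2) by simp
qed simp_all

lemma is_ssyt_iff: "is_ssyt n cs \<longleftrightarrow> set cs \<subseteq> columns n \<and> successively column_le cs"
  unfolding is_ssyt_def successively_conv_nth column_le_def columns_def by blast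

lemma rSSYT_iff: "cs \<in> rSSYT n \<longleftrightarrow> set cs \<subseteq> columns n \<and> sorted_wrt column_less cs"
proof -
  have "successively column_le cs \<longleftrightarrow> sorted_wrt column_le cs"
    by (rule successively_conv_sorted_wrt) (auto intro: transpI column_le_trans)
  moreover have "sorted_wrt column_le cs \<and> distinct cs \<longleftrightarrow> sorted_wrt column_less cs"
  proof
    assume "sorted_wrt column_le cs \<and> distinct cs"
    then show "sorted_wrt column_less cs"
      by (auto simp: sorted_wrt_iff_nth_less column_less_def nth_eq_iff_index_eq)
  next
    assume less: "sorted_wrt column_less cs"
    then have "sorted_wrt column_le cs"
      by (rule sorted_wrt_mono_rel[rotated]) (simp add: column_less_def)
    moreover have "cs ! i \<noteq> cs ! j" if "i < j" "j < length cs" for i j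
      using less that by (auto simp: sorted_wrt_iff_nth_less column_less_def)
    then have "distinct cs"
      by (metis distinct_conv_nth nat_neq_iff)
    ultimately show "sorted_wrt column_le cs \<and> distinct cs" by blast
  qed
  ultimately show ?thesis unfolding rSSYT_def is_ssyt_iff by blast
qed

lemma rSSYT_last_in_columns: "cs \<in> rSSYT n \<Longrightarrow> cs \<noteq> [] \<Longrightarrow> last cs \<in> columns n"
  unfolding rSSYT_iff by auto

lemma rSSYT_snoc:
  "cs @ [D] \<in> rSSYT n \<longleftrightarrow> cs \<in> rSSYT n \<and> D \<in> columns n \<and> (\<forall>C\<in>set cs. column_less C D)"
  unfolding rSSYT_iff sorted_wrt_append by auto

lemma rSSYT_column_less_last:
  assumes "cs \<in> rSSYT n" "C \<in> set cs" "C \<noteq> last cs"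
  shows "column_less C (last cs)"
proof -
  have "cs \<noteq> []" using assms(2) by auto
  then have "cs = butlast cs @ [last cs]" by (rule append_butlast_last_id[symmetric])
  moreover have "C \<in> set (butlast cs)"
    using assms(2,3) by (subst (asm) \<open>cs = butlast cs @ [last cs]\<close>) auto
  ultimately show ?thesis using assms(1) rSSYT_snoc by metis
qed

lemma rSSYT_snoc_last:
  assumes "cs \<noteq> []"
  shows "cs @ [D] \<in> rSSYT n \<longleftrightarrow> cs \<in> rSSYT n \<and> D \<in> columns n \<and> column_less (last cs) D"
proof -
  have "\<forall>C\<in>set cs. column_less C D" if "cs \<in> rSSYT n" "D \<in> columns n" "column_less (last cs) D"
  proof
    fix C assume C: "C \<in> set cs"
    have "last cs \<in> columns n" "C \<in> columns n"
      using that(1) C assms unfolding rSSYT_iff by auto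
    then show "column_less C D"
      using rSSYT_column_less_last[OF that(1) C] that(3)
      by (metis column_less_trans finite_if_columns)
  qed
  then show ?thesis using rSSYT_snoc assms by (metis last_in_set)
qed

lemma finite_rSSYT: "finite (rSSYT n)"
proof (rule finite_subset)
  show "rSSYT n \<subseteq> {xs. set xs \<subseteq> Pow {1..n} \<and> length xs \<le> card (Pow {1..n})}"
  proof
    fix cs assume "cs \<in> rSSYT n"
    then have "set cs \<subseteq> Pow {1..n}" "distinct cs" unfolding rSSYT_def is_ssyt_def by auto
    then show "cs \<in> {xs. set xs \<subseteq> Pow {1..n} \<and> length xs \<le> card (Pow {1..n})}"
      by (metis card_mono distinct_card finite_Pow_iff finite_atLeastAtMost mem_Collect_eq)
  qed
qed (rule finite_lists_length_le, simp)

lemma Phi_eq_prod_leg_weight: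
  assumes "is_ssyt n cs"
  shows "Phi cs Y = (\<Prod>j < length cs - 1. leg_weight Y (cs ! j) (cs ! Suc j))"
proof -
  define L where "L = length cs - 1"
  define rows where "rows j = {i. i < card (cs ! Suc j) \<and> entry (cs ! Suc j) i \<notin> cs ! j}" for j
  have fin: "finite (cs ! j)" if "j < L" for j
  proof -
    have "cs ! j \<in> set cs" using that unfolding L_def by simp
    then show ?thesis using assms finite_if_columns unfolding is_ssyt_iff by blast
  qed
  have le: "column_le (cs ! j) (cs ! Suc j)" if "j < L" for j
    using assms that unfolding is_ssyt_iff successively_conv_nth L_def by auto
  have leg: "leg_plus cs i j = cs ! j \<inter> {entry (cs ! j) i..entry (cs ! Suc j) i}"
    and cell: "(i, j) \<in> leg_cells cs"
    if "j < L" "i \<in> rows j" for i j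
  proof -
    have "i < card (cs ! j)" using le[OF that(1)] that(2) unfolding column_le_def rows_def by simp
    then show "(i, j) \<in> leg_cells cs" using that unfolding leg_cells_def rows_def L_def by auto
    then show "leg_plus cs i j = cs ! j \<inter> {entry (cs ! j) i..entry (cs ! Suc j) i}"
      using that(2) unfolding leg_plus_def rows_def by simp
  qed
  have cells: "{(i, j). (i, j) \<in> leg_cells cs \<and> leg_plus cs i j \<noteq> {}}
      = (\<lambda>(j, i). (i, j)) ` (SIGMA j:{..<L}. rows j)"
  proof (intro equalityI subsetI)
    fix p assume "p \<in> {(i, j). (i, j) \<in> leg_cells cs \<and> leg_plus cs i j \<noteq> {}}"
    then obtain i j where "p = (i, j)" "(i, j) \<in> leg_cells cs" "leg_plus cs i j \<noteq> {}" by auto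
    then show "p \<in> (\<lambda>(j, i). (i, j)) ` (SIGMA j:{..<L}. rows j)"
      unfolding leg_cells_def leg_plus_def rows_def L_def by (auto split: if_splits)
  next
    fix p assume "p \<in> (\<lambda>(j, i). (i, j)) ` (SIGMA j:{..<L}. rows j)"
    then obtain i j where p: "p = (i, j)" "j < L" "i \<in> rows j" by auto
    then have "i < card (cs ! j)" "entry (cs ! j) i \<le> entry (cs ! Suc j) i"
      using le[OF p(2)] unfolding column_le_def rows_def by auto
    then have "entry (cs ! j) i \<in> leg_plus cs i j"
      using leg[OF p(2,3)] entry_in[OF fin[OF p(2)]] by auto
    then show "p \<in> {(i, j). (i, j) \<in> leg_cells cs \<and> leg_plus cs i j \<noteq> {}}"
      using p cell by auto
  qed
  have "inj_on (\<lambda>(j, i). (i, j)) (SIGMA j:{..<L}. rows j)"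
    by (rule inj_onI) auto
  then have "Phi cs Y = (\<Prod>(j, i) \<in> (SIGMA j:{..<L}. rows j). 1 - Y ^ card (leg_plus cs i j))"
    unfolding Phi_def cells by (subst prod.reindex) (simp_all add: case_prod_beta comp_def)
  also have "\<dots> = (\<Prod>j<L. \<Prod>i \<in> rows j. 1 - Y ^ card (leg_plus cs i j))"
    by (subst prod.Sigma) (auto simp: rows_def)
  also have "\<dots> = (\<Prod>j<L. leg_weight Y (cs ! j) (cs ! Suc j))"
    unfolding leg_weight_def rows_def[symmetric] using leg by (intro prod.cong) auto
  finally show ?thesis unfolding L_def .
qed

lemma Phi_snoc:
  assumes "is_ssyt n (cs @ [D])" "cs \<noteq> []"
  shows "Phi (cs @ [D]) Y = Phi cs Y * leg_weight Y (last cs) D"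
proof -
  have cs: "is_ssyt n cs" using assms(1) by (simp add: is_ssyt_iff successively_append_iff)
  obtain L where L: "length cs = Suc L" using assms(2) by (cases cs) auto
  have "Phi (cs @ [D]) Y = (\<Prod>j<L. leg_weight Y (cs ! j) (cs ! Suc j)) * leg_weight Y (cs ! L) D"
    using Phi_eq_prod_leg_weight[OF assms(1), of Y] L by (simp add: nth_append)
  also have "\<dots> = Phi cs Y * leg_weight Y (last cs) D"
    using Phi_eq_prod_leg_weight[OF cs, of Y] L assms(2) by (simp add: last_conv_nth)
  finally show ?thesis .
qed

lemma Phi_singleton: "Phi [D] Y = 1"
  unfolding Phi_def leg_cells_def by simp

lemma Phi_Nil: "Phi [] Y = 1"
  unfolding Phi_def leg_cells_def by simp

section \<open>Tableaux with a given last column\<close>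

context
  fixes n :: nat and Y :: "'a::field" and Z :: "nat \<Rightarrow> 'a"
begin

definition X :: "nat set \<Rightarrow> 'a" where
  "X C = Y ^ excess C * Z (card C)"

definition tableau_weight :: "nat set list \<Rightarrow> 'a" where
  "tableau_weight cs = Phi cs Y * (\<Prod>C \<in> set cs. X C / (1 - X C))"

definition last_column_sum :: "nat set \<Rightarrow> 'a" where
  "last_column_sum D = (\<Sum>cs | cs \<in> rSSYT n \<and> cs \<noteq> [] \<and> last cs = D. tableau_weight cs)"

definition igusa_tail :: "nat \<Rightarrow> 'a" where
  "igusa_tail k = igusa (n - k) Y (\<lambda>i. Z (i + k))"

definition igusa_summand :: "nat \<Rightarrow> 'a" where
  "igusa_summand k = Z k / (1 - Z k) * igusa_tail k"

lemma igusa_tail_recursion: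
  assumes Y: "\<forall>i\<in>{1..n}. Y ^ i \<noteq> 1" and "k \<le> n"
  shows "igusa_tail k = 1 + (\<Sum>j = Suc k..n. qbinomial Y (n - k) (j - k) * igusa_summand j)"
proof -
  have "igusa_tail k = 1 + (\<Sum>j = 1..n - k. qbinomial Y (n - k) j * igusa_summand (j + k))"
    unfolding igusa_tail_def igusa_summand_def using Y
    by (subst igusa_Min_recursion) (auto simp: add.assoc algebra_simps)
  also have "(\<Sum>j = 1..n - k. qbinomial Y (n - k) j * igusa_summand (j + k))
      = (\<Sum>j = Suc k..n. qbinomial Y (n - k) (j - k) * igusa_summand j)"
    using assms(2) sum.shift_bounds_cl_nat_ivl[of "\<lambda>j. qbinomial Y (n - k) (j - k) * igusa_summand j" 1 k "n - k"]
    by simp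
  finally show ?thesis .
qed

lemma HLS_eq_sum_last_column_sum:
  "HLS n Y (\<lambda>C. Y ^ schubert_dim n ({1..n} - C) * Z (card C)) = 1 + (\<Sum>D \<in> columns n. last_column_sum D)"
proof -
  have "Y ^ schubert_dim n ({1..n} - C) * Z (card C) = X C" if "cs \<in> rSSYT n" "C \<in> set cs" for cs C
  proof -
    have "C \<subseteq> {1..n}" using that by (auto simp: rSSYT_iff columns_def)
    then show ?thesis unfolding X_def by (simp only: schubert_dim_complement)
  qed
  then have "HLS n Y (\<lambda>C. Y ^ schubert_dim n ({1..n} - C) * Z (card C)) = sum tableau_weight (rSSYT n)"
    unfolding HLS_def tableau_weight_def by (auto intro!: sum.cong prod.cong)
  also have "\<dots> = tableau_weight [] + sum tableau_weight (rSSYT n - {[]})"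
    using finite_rSSYT by (subst sum.remove[of _ "[]"]) (auto simp: rSSYT_iff)
  also have "sum tableau_weight (rSSYT n - {[]})
      = (\<Sum>D \<in> columns n. \<Sum>cs | cs \<in> rSSYT n - {[]} \<and> last cs = D. tableau_weight cs)"
    by (rule sum.group[symmetric]) (auto simp: finite_rSSYT finite_columns intro: rSSYT_last_in_columns)
  also have "\<dots> = (\<Sum>D \<in> columns n. last_column_sum D)"
    unfolding last_column_sum_def
    by (intro sum.cong refl arg_cong[where f = "sum tableau_weight"]) blast
  finally show ?thesis by (simp add: tableau_weight_def Phi_Nil)
qed

lemma last_column_sum_recursion:
  assumes D: "D \<in> columns n"
  shows "last_column_sum D = X D / (1 - X D)
    * (1 + (\<Sum>C | C \<in> columns n \<and> column_less C D. leg_weight Y C D * last_column_sum C))"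
proof -
  define E where "E = {cs \<in> rSSYT n. cs \<noteq> [] \<and> column_less (last cs) D}"
  have finE: "finite E" unfolding E_def using finite_rSSYT by auto
  have tableaux: "{cs. cs \<in> rSSYT n \<and> cs \<noteq> [] \<and> last cs = D} = insert [D] ((\<lambda>cs. cs @ [D]) ` E)"
  proof (intro equalityI subsetI)
    fix cs assume cs: "cs \<in> {cs. cs \<in> rSSYT n \<and> cs \<noteq> [] \<and> last cs = D}"
    then have snoc: "cs = butlast cs @ [D]" by (metis (mono_tags) append_butlast_last_id mem_Collect_eq)
    show "cs \<in> insert [D] ((\<lambda>cs. cs @ [D]) ` E)"
    proof (cases "butlast cs = []")
      case True
      then show ?thesis using snoc by simp
    next
      case False
      then have "butlast cs \<in> E"
        using cs snoc rSSYT_snoc_last[OF False, of D n] unfolding E_def by simp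
      then show ?thesis using snoc by blast
    qed
  next
    fix cs assume "cs \<in> insert [D] ((\<lambda>cs. cs @ [D]) ` E)"
    then consider "cs = [D]" | bs where "bs \<in> E" "cs = bs @ [D]" by blast
    then show "cs \<in> {cs. cs \<in> rSSYT n \<and> cs \<noteq> [] \<and> last cs = D}"
    proof cases
      case 1
      then show ?thesis using D by (simp add: rSSYT_iff)
    next
      case 2
      then show ?thesis using D rSSYT_snoc_last[of bs D n] unfolding E_def by simp
    qed
  qed
  have weight_snoc: "tableau_weight (cs @ [D]) = X D / (1 - X D) * (leg_weight Y (last cs) D * tableau_weight cs)"
    if "cs \<in> E" for cs
  proof -
    have "cs @ [D] \<in> rSSYT n" "cs \<noteq> []" using that D rSSYT_snoc_last unfolding E_def by auto
    then have "is_ssyt n (cs @ [D])" "D \<notin> set cs" "cs \<noteq> []" unfolding rSSYT_def by auto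
    then show ?thesis unfolding tableau_weight_def by (simp add: Phi_snoc algebra_simps)
  qed
  have "last_column_sum D = tableau_weight [D] + (\<Sum>cs \<in> E. tableau_weight (cs @ [D]))"
    unfolding last_column_sum_def tableaux using finE
    by (subst sum.insert) (auto simp: sum.reindex inj_on_def E_def)
  also have "(\<Sum>cs \<in> E. tableau_weight (cs @ [D]))
      = X D / (1 - X D) * (\<Sum>cs \<in> E. leg_weight Y (last cs) D * tableau_weight cs)"
    by (simp add: weight_snoc sum_distrib_left)
  also have "(\<Sum>cs \<in> E. leg_weight Y (last cs) D * tableau_weight cs)
      = (\<Sum>C | C \<in> columns n \<and> column_less C D. \<Sum>cs | cs \<in> E \<and> last cs = C. leg_weight Y (last cs) D * tableau_weight cs)"
    by (rule sum.group[symmetric])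
      (use finE finite_columns in \<open>auto simp: E_def intro: rSSYT_last_in_columns\<close>)
  also have "\<dots> = (\<Sum>C | C \<in> columns n \<and> column_less C D. leg_weight Y C D * last_column_sum C)"
    unfolding last_column_sum_def E_def sum_distrib_left
    by (intro sum.cong refl) (auto intro: arg_cong[where f = "sum _"])
  finally show ?thesis by (simp add: tableau_weight_def Phi_singleton algebra_simps)
qed

lemma sum_column_less_igusa_summand:
  assumes Y: "\<forall>i\<in>{1..n}. Y ^ i \<noteq> 1" and D: "D \<in> columns n"
  shows "(\<Sum>C | C \<in> columns n \<and> column_less C D. Y ^ excess C * leg_weight Y C D * igusa_summand (card C))
    = igusa_tail (card D) - 1 + (1 - Y ^ excess D) * igusa_summand (card D)"
proof -
  let ?f = "\<lambda>C. Y ^ excess C * leg_weight Y C D * igusa_summand (card C)"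
  have Dn: "D \<subseteq> {1..n}" "finite D" "D \<noteq> {}" using D finite_if_columns by (auto simp: columns_def)
  then have dn: "card D \<le> n" using card_mono[OF _ Dn(1)] by simp
  have "{C. C \<in> columns n \<and> column_less C D} = {C. C \<subseteq> {1..n} \<and> column_le C D} - {D}"
    using Dn card_gt_0_iff by (fastforce simp: columns_def column_less_def column_le_def)
  then have "(\<Sum>C | C \<in> columns n \<and> column_less C D. ?f C)
      = (\<Sum>C | C \<subseteq> {1..n} \<and> column_le C D. ?f C) - ?f D"
    using Dn column_le_refl by (simp add: sum_diff1 finite_subset[of _ "Pow {1..n}"])
  also have "(\<Sum>C | C \<subseteq> {1..n} \<and> column_le C D. ?f C)
      = (\<Sum>k = card D..n. qbinomial Y (n - card D) (k - card D) * igusa_summand k)"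
    by (rule sum_column_le_by_card[OF Dn(1)])
  also have "\<dots> = igusa_summand (card D) + (igusa_tail (card D) - 1)"
    using igusa_tail_recursion[OF Y dn] dn by (simp add: sum.atLeast_Suc_atMost)
  finally show ?thesis using leg_weight_self[OF Dn(2), of Y] by (simp add: algebra_simps)
qed

lemma last_column_sum_eq:
  assumes Y: "\<forall>i\<in>{1..n}. Y ^ i \<noteq> 1" and Z: "\<forall>i\<in>{1..n}. Z i \<noteq> 1"
    and X: "\<forall>C \<in> columns n. X C \<noteq> 1"
  shows "D \<in> columns n \<Longrightarrow> last_column_sum D = Y ^ excess D * igusa_summand (card D)"
proof (induction D rule: wf_induct_rule[OF wf_column_less[of n]])
  case (1 D)
  define y z I where "y = Y ^ excess D" and "z = Z (card D)" and "I = igusa_tail (card D)"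
  have Dn: "D \<subseteq> {1..n}" "D \<noteq> {}" "finite D" using 1(2) finite_if_columns by (auto simp: columns_def)
  then have "card D \<in> {1..n}" using card_mono[OF _ Dn(1)] by (simp add: Suc_leI card_gt_0_iff)
  then have nz: "1 - z \<noteq> 0" "1 - y * z \<noteq> 0"
    using Z X 1(2) by (auto simp: z_def y_def X_def)
  have "last_column_sum D = y * z / (1 - y * z)
      * (1 + (\<Sum>C | C \<in> columns n \<and> column_less C D. Y ^ excess C * leg_weight Y C D * igusa_summand (card C)))"
  proof -
    have "(\<Sum>C | C \<in> columns n \<and> column_less C D. leg_weight Y C D * last_column_sum C)
        = (\<Sum>C | C \<in> columns n \<and> column_less C D. Y ^ excess C * leg_weight Y C D * igusa_summand (card C))"
      using 1 by (intro sum.cong refl) auto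
    then show ?thesis unfolding last_column_sum_recursion[OF 1(2)] X_def y_def z_def by simp
  qed
  also have "\<dots> = y * z / (1 - y * z) * (I + (1 - y) * (z / (1 - z) * I))"
    unfolding sum_column_less_igusa_summand[OF Y 1(2)] by (simp add: y_def z_def I_def igusa_summand_def)
  also have "I + (1 - y) * (z / (1 - z) * I) = (1 - y * z) / (1 - z) * I"
    using nz(1) by (simp add: field_simps)
  also have "y * z / (1 - y * z) * ((1 - y * z) / (1 - z) * I) = y * (z / (1 - z) * I)"
    using nz(2) by simp
  finally show ?case by (simp add: y_def z_def I_def igusa_summand_def)
qed

lemma sum_columns_igusa_summand:
  assumes Y: "\<forall>i\<in>{1..n}. Y ^ i \<noteq> 1"
  shows "(\<Sum>D \<in> columns n. Y ^ excess D * igusa_summand (card D)) = igusa n Y Z - 1"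
proof -
  let ?f = "\<lambda>C. Y ^ excess C * leg_weight Y C {} * igusa_summand (card C)"
  have "columns n = {C. C \<subseteq> {1..n} \<and> column_le C {}} - {{}}"
    by (auto simp: columns_def column_le_def)
  then have "(\<Sum>D \<in> columns n. Y ^ excess D * igusa_summand (card D))
      = (\<Sum>C | C \<subseteq> {1..n} \<and> column_le C {}. ?f C) - ?f {}"
    by (simp add: sum_diff1 finite_subset[of _ "Pow {1..n}"] leg_weight_def column_le_def)
  also have "\<dots> = (\<Sum>k = 0..n. qbinomial Y n k * igusa_summand k) - igusa_summand 0"
    using sum_column_le_by_card[of "{}" n Y igusa_summand] by (simp add: excess_def leg_weight_def)
  also have "\<dots> = igusa_tail 0 - 1"
    using igusa_tail_recursion[OF Y, of 0] by (simp add: sum.atLeast_Suc_atMost)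
  finally show ?thesis by (simp add: igusa_tail_def)
qed

end

theorem mainTheorem5:
  fixes n :: nat and Y :: "'a::field" and Z :: "nat \<Rightarrow> 'a"
  assumes "\<forall>i\<in>{1..n}. Y ^ i \<noteq> 1"
    and "\<forall>i\<in>{1..n}. Z i \<noteq> 1"
    and "\<forall>C. C \<subseteq> {1..n} \<and> C \<noteq> {} \<longrightarrow>
           Y ^ schubert_dim n ({1..n} - C) * Z (card C) \<noteq> 1"
  shows "igusa n Y Z = HLS n Y (\<lambda>C. Y ^ schubert_dim n ({1..n} - C) * Z (card C))"
proof -
  have X: "\<forall>C \<in> columns n. X Y Z C \<noteq> 1"
  proof
    fix C assume "C \<in> columns n"
    then have C: "C \<subseteq> {1..n}" "C \<noteq> {}" by (auto simp: columns_def)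
    then show "X Y Z C \<noteq> 1"
      using assms(3) unfolding X_def schubert_dim_complement[OF C(1), symmetric] by blast
  qed
  have "HLS n Y (\<lambda>C. Y ^ schubert_dim n ({1..n} - C) * Z (card C))
      = 1 + (\<Sum>D \<in> columns n. last_column_sum n Y Z D)"
    by (rule HLS_eq_sum_last_column_sum)
  also have "\<dots> = 1 + (\<Sum>D \<in> columns n. Y ^ excess D * igusa_summand n Y Z (card D))"
    using last_column_sum_eq[OF assms(1,2) X] by simp
  also have "\<dots> = igusa n Y Z"
    using sum_columns_igusa_summand[OF assms(1)] by simp
  finally show ?thesis ..
qed

end
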